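(* Consider the binary model. (a) For every $n\ge2$ and all $\mathbf{x},\mathbf{y},\mathbf{v}\in\mathbb{R}^{2n-1}$, \[ \|[F'(\mathbf{x})-F'(\mathbf{y})]\mathbf{v}\|_\infty\le (n-1)\|\mathbf{x}-\mathbf{y}\|_\infty\|\mathbf{v}\|_\infty,\qquad \max_{i=1,\dots,2n-1}\|F_i'(\mathbf{x})-F_i'(\mathbf{y})\|_\infty\le \frac{n-1}{2}\|\mathbf{x}-\mathbf{y}\|_\infty . \] (b) There are absolute constants $c_{11},c_{12}>0$ such that the following holds: let $\boldsymbol\theta^*=\boldsymbol\theta^*_n\in\mathbb{R}^{2n-1}$ satisfy $e^{2\|\boldsymbol\theta^*\|_\infty}=o(n)$. Then for all sufficiently large $n$, whenever the realized degrees satisfy \[ \max\Bigl\{\max_{1\le i\le n}|d_i-\mathbb{E}_{\boldsymbol\theta^*}d_i|,\ \max_{1\le j\le n}|b_j-\mathbb{E}_{\boldsymbol\theta^*}b_j|\Bigr\}\le\sqrt{(n-1)\log(n-1)}, \] one has \[ r:=\bigl\|[F'(\boldsymbol\theta^* )]^{-1}F(\boldsymbol\theta^* )\bigr\|_\infty\le \frac{(\log n)^{1/2}}{n^{1/2}}\Bigl(c_{11}e^{6\|\boldsymbol\theta^*\|_\infty}+c_{12}e^{2\|\boldsymbol\theta^*\|_\infty}\Bigr). \]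
   Context: Binary model: Let $n\ge2$. For $\boldsymbol\theta=(\alpha_1,\dots,\alpha_n,\beta_1,\dots,\beta_{n-1})^\top\in\mathbb{R}^{2n-1}$ set $\beta_n=0$, and let $\mathbb{P}_{\boldsymbol\theta}$ be the law of a random $n\times n$ matrix $A=(a_{i,j})$ with $a_{i,i}=0$ and $a_{i,j}$ ($i\ne j$) mutually independent Bernoulli with $\mathbb{P}(a_{i,j}=1)=e^{\alpha_i+\beta_j}/(1+e^{\alpha_i+\beta_j})$. Out-degrees $d_i=\sum_{j\ne i}a_{i,j}$, in-degrees $b_j=\sum_{i\ne j}a_{i,j}$. Let $f(x)=e^x/(1+e^x)$ and define $F:\mathbb{R}^{2n-1}\to\mathbb{R}^{2n-1}$ by $F_i(\boldsymbol\theta)=d_i-\sum_{k\ne i}f(\alpha_i+\beta_k)$ for $i=1,\dots,n$ and $F_{n+j}(\boldsymbol\theta)=b_j-\sum_{k\ne j}f(\alpha_k+\beta_j)$ for $j=1,\dots,n-1$ (always with $\beta_n=0$). $F'(\boldsymbol\theta)$ is the Jacobian matrix of $F$ and $F_i'(\boldsymbol\theta)$ the gradient of $F_i$. $\|\cdot\|_\infty$ is the max-norm of vectors. *)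

theory Defs
  imports "HOL-Analysis.Derivative" "Jordan_Normal_Form.Matrix"
begin

(* Indices are 0-based: theta = (alpha_0..alpha_{n-1}, beta_0..beta_{n-2}), beta_{n-1} = 0;
   theta has dimension 2n-1. *)

definition logistic :: "real \<Rightarrow> real" where
  "logistic x = exp x / (1 + exp x)"

definition alpha :: "real vec \<Rightarrow> nat \<Rightarrow> real" where
  "alpha \<theta> i = \<theta> $ i"

definition beta :: "nat \<Rightarrow> real vec \<Rightarrow> nat \<Rightarrow> real" where
  "beta n \<theta> j = (if j < n - 1 then \<theta> $ (n + j) else 0)"

definition linf :: "real vec \<Rightarrow> real" where
  "linf v = Max (insert 0 {\<bar>v $ i\<bar> | i. i < dim_vec v})"

definition outdeg :: "nat \<Rightarrow> (nat \<Rightarrow> nat \<Rightarrow> bool) \<Rightarrow> nat \<Rightarrow> real" where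
  "outdeg n A i = real (card {j. j < n \<and> j \<noteq> i \<and> A i j})"

definition indeg :: "nat \<Rightarrow> (nat \<Rightarrow> nat \<Rightarrow> bool) \<Rightarrow> nat \<Rightarrow> real" where
  "indeg n A j = real (card {i. i < n \<and> i \<noteq> j \<and> A i j})"

(* E_theta d_i and E_theta b_j: sums of the Bernoulli success probabilities *)
definition Eoutdeg :: "nat \<Rightarrow> real vec \<Rightarrow> nat \<Rightarrow> real" where
  "Eoutdeg n \<theta> i = (\<Sum>k\<in>{k. k < n \<and> k \<noteq> i}. logistic (alpha \<theta> i + beta n \<theta> k))"

definition Eindeg :: "nat \<Rightarrow> real vec \<Rightarrow> nat \<Rightarrow> real" where
  "Eindeg n \<theta> j = (\<Sum>k\<in>{k. k < n \<and> k \<noteq> j}. logistic (alpha \<theta> k + beta n \<theta> j))"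

definition Fcomp :: "nat \<Rightarrow> (nat \<Rightarrow> nat \<Rightarrow> bool) \<Rightarrow> real vec \<Rightarrow> nat \<Rightarrow> real" where
  "Fcomp n A \<theta> i =
     (if i < n then outdeg n A i - (\<Sum>k\<in>{k. k < n \<and> k \<noteq> i}. logistic (alpha \<theta> i + beta n \<theta> k))
      else indeg n A (i - n) - (\<Sum>k\<in>{k. k < n \<and> k \<noteq> i - n}. logistic (alpha \<theta> k + beta n \<theta> (i - n))))"

definition Fvec :: "nat \<Rightarrow> (nat \<Rightarrow> nat \<Rightarrow> bool) \<Rightarrow> real vec \<Rightarrow> real vec" where
  "Fvec n A \<theta> = vec (2 * n - 1) (Fcomp n A \<theta>)"

definition vupd :: "real vec \<Rightarrow> nat \<Rightarrow> real \<Rightarrow> real vec" where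
  "vupd \<theta> j t = vec (dim_vec \<theta>) (\<lambda>k. if k = j then t else \<theta> $ k)"

definition Jac :: "nat \<Rightarrow> (nat \<Rightarrow> nat \<Rightarrow> bool) \<Rightarrow> real vec \<Rightarrow> real mat" where
  "Jac n A \<theta> = mat (2 * n - 1) (2 * n - 1)
     (\<lambda>(i, j). deriv (\<lambda>t. Fcomp n A (vupd \<theta> j t) i) (\<theta> $ j))"

end

theory Submission
  imports Defs "Jordan_Normal_Form.Determinant"
begin

(* Write u_ik = f'(alpha_i + beta_k), where f' = f (1 - f) is the derivative of the logistic
   function f.  Differentiating F gives F'(theta) explicitly: row i < n has diagonal entry
   -(sum_k u_ik) and entries -u_ik in the beta-columns, and symmetrically for the beta-rows.
   Equivalently, with w_k the negated beta-block of z (and w_{n-1} = 0), the rows of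
   F'(theta) z read  -sum_k u_ik (z_i - w_k)  and  sum_k u_kj (w_j - z_k).

   (a) f' is 1/4-Lipschitz, so every u_ik moves by at most ||x - y|| / 2.  The row formula
       gives the bound for [F'(x) - F'(y)] v, the explicit entries the bound for the rows.
   (b) Instead of approximating the inverse we use a discrete maximum principle.  If all rows
       of F'(theta) z, and the "missing row" for w_{n-1} (alpha-row sum minus beta-row sum),
       are at most eps, then each z_i is nearly an average of the w_k and vice versa, with
       weights in [e^{-2T}/4, 1/4] (T = ||theta||).  Contraction of the two oscillations gives
       ||z|| <= 20 e^{4T} eps / (n - 1); with eps = 0 this also yields invertibility.  Since
       sum_i d_i = sum_j b_j, the vector F(theta) satisfies these hypotheses with
       eps = sqrt((n-1) log(n-1)), which gives part (b) for every n >= 3 with c11 = 30, c12 = 1. *)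


section \<open>The logistic function and its derivative\<close>

definition logistic_deriv :: "real \<Rightarrow> real" where
  "logistic_deriv x = logistic x * (1 - logistic x)"

lemma one_plus_exp_neq_0: "1 + exp (x::real) \<noteq> 0"
  by (smt (verit) exp_gt_zero)

lemma logistic_bounds: "0 < logistic x" "logistic x < 1"
  unfolding logistic_def by (auto simp: divide_simps add_pos_pos)

lemma logistic_deriv_exp: "logistic_deriv x = exp x / (1 + exp x)^2"
  unfolding logistic_deriv_def logistic_def
  by (simp add: field_simps power2_eq_square one_plus_exp_neq_0)

lemma DERIV_logistic: "DERIV logistic x :> logistic_deriv x"
proof -
  have "DERIV (\<lambda>x. exp x / (1 + exp x)) x :> (exp x * (1 + exp x) - exp x * exp x) / (1 + exp x)^2"
    by (auto intro!: derivative_eq_intros simp: power2_eq_square one_plus_exp_neq_0)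
  moreover have "(exp x * (1 + exp x) - exp x * exp x) / (1 + exp x)^2 = logistic_deriv x"
    by (simp add: logistic_deriv_exp algebra_simps)
  ultimately show ?thesis unfolding logistic_def[abs_def] by simp
qed

lemma DERIV_logistic_deriv: "DERIV logistic_deriv x :> logistic_deriv x * (1 - 2 * logistic x)"
proof -
  have "DERIV (\<lambda>x. logistic x * (1 - logistic x)) x
          :> logistic_deriv x * (1 - logistic x) + logistic x * (- logistic_deriv x)"
    by (auto intro!: derivative_eq_intros DERIV_logistic)
  then show ?thesis unfolding logistic_deriv_def[abs_def] by (simp add: algebra_simps)
qed

lemma logistic_deriv_nonneg: "0 \<le> logistic_deriv x"
  using logistic_bounds[of x] unfolding logistic_deriv_def by auto

lemma logistic_deriv_le: "logistic_deriv x \<le> 1/4"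
proof -
  have "0 \<le> (logistic x - 1/2)^2" by simp
  then show ?thesis unfolding logistic_deriv_def by (simp add: power2_eq_square algebra_simps)
qed

text \<open>The lower bound is what makes the Jacobian weights uniformly comparable.\<close>

lemma logistic_deriv_lower: "exp (- \<bar>x\<bar>) / 4 \<le> logistic_deriv x"
proof (cases "x \<ge> 0")
  case True
  have "(1 + exp x)^2 \<le> (2 * exp x)^2" using True by (intro power_mono) (auto simp: add_pos_pos)
  then have "exp x / (2 * exp x)^2 \<le> exp x / (1 + exp x)^2"
    by (intro divide_left_mono) (auto simp: one_plus_exp_neq_0)
  moreover have "exp (- \<bar>x\<bar>) / 4 = exp x / (2 * exp x)^2"
    using True by (simp add: power2_eq_square exp_minus field_simps)
  ultimately show ?thesis by (simp add: logistic_deriv_exp)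
next
  case False
  have "(1 + exp x)^2 \<le> 2^2" using False by (intro power_mono) (auto simp: add_pos_pos)
  then have "exp x / 4 \<le> exp x / (1 + exp x)^2"
    by (intro divide_left_mono) (auto simp: one_plus_exp_neq_0)
  then show ?thesis using False by (simp add: logistic_deriv_exp)
qed

text \<open>Since \<open>|f''| = |f' (1 - 2f)| \<le> 1/4\<close>, the derivative \<open>f'\<close> is \<open>1/4\<close>-Lipschitz.\<close>

lemma logistic_deriv_lipschitz: "\<bar>logistic_deriv a - logistic_deriv b\<bar> \<le> \<bar>a - b\<bar> / 4"
proof -
  have slope: "\<bar>logistic_deriv b - logistic_deriv a\<bar> \<le> (b - a) / 4" if ab: "a < b" for a b
  proof -
    obtain z where z: "logistic_deriv b - logistic_deriv a
                         = (b - a) * (logistic_deriv z * (1 - 2 * logistic z))"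
      using MVT2[OF ab, of logistic_deriv "\<lambda>x. logistic_deriv x * (1 - 2 * logistic x)"]
        DERIV_logistic_deriv by blast
    have "\<bar>logistic_deriv z\<bar> * \<bar>1 - 2 * logistic z\<bar> \<le> 1/4 * 1"
      using logistic_bounds[of z] logistic_deriv_le[of z] logistic_deriv_nonneg[of z]
      by (intro mult_mono) auto
    then have "(b - a) * \<bar>logistic_deriv z * (1 - 2 * logistic z)\<bar> \<le> (b - a) * (1/4)"
      using ab by (intro mult_left_mono) (auto simp: abs_mult)
    then show ?thesis using z ab by (simp add: abs_mult)
  qed
  show ?thesis
    using slope[of a b] slope[of b a] by (cases a b rule: linorder_cases) (auto simp: abs_minus_commute)
qed


lemma linf_nonneg: "0 \<le> linf v"
  unfolding linf_def by (rule Max_ge) auto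

lemma linf_ge: "i < dim_vec v \<Longrightarrow> \<bar>v $ i\<bar> \<le> linf v"
  unfolding linf_def by (rule Max_ge) auto

lemma linf_le: "0 \<le> c \<Longrightarrow> (\<And>i. i < dim_vec v \<Longrightarrow> \<bar>v $ i\<bar> \<le> c) \<Longrightarrow> linf v \<le> c"
  unfolding linf_def by (subst Max_le_iff) auto


lemma sum_lessThan_add: "(\<Sum>j<a + (b::nat). g j) = (\<Sum>j<a. g j) + (\<Sum>k<b. g (a + k))"
  by (induction b) (auto simp: add.assoc)

lemma sum_lessThan_last: "n \<ge> 1 \<Longrightarrow> (\<Sum>k<n. f k) = (\<Sum>k<n - 1. f k) + f (n - 1 :: nat)"
  by (cases n) auto

lemma sum_punctured:
  "(\<Sum>k\<in>{k. k < (n::nat) \<and> k \<noteq> i}. f k) = (\<Sum>k<n. if k \<noteq> i then f k else (0::real))"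
  by (simp add: sum.inter_filter[symmetric] conj_commute)

lemma card_punctured: "i < (n::nat) \<Longrightarrow> card {k. k < n \<and> k \<noteq> i} = n - 1"
proof -
  assume "i < n"
  moreover have "{k. k < n \<and> k \<noteq> i} = {..<n} - {i}" by auto
  ultimately show ?thesis by simp
qed

lemma abs_sum_le_card:
  assumes "\<And>k. k \<in> S \<Longrightarrow> \<bar>a k\<bar> \<le> (c::real)"
  shows "\<bar>\<Sum>k\<in>S. a k\<bar> \<le> real (card S) * c"
proof -
  have "\<bar>\<Sum>k\<in>S. a k\<bar> \<le> (\<Sum>k\<in>S. \<bar>a k\<bar>)" by (rule sum_abs)
  also have "\<dots> \<le> (\<Sum>k\<in>S. c)" using assms by (rule sum_mono)
  finally show ?thesis by simp
qed


section \<open>The Jacobian in closed form\<close>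

definition jac_weight :: "nat \<Rightarrow> real vec \<Rightarrow> nat \<Rightarrow> nat \<Rightarrow> real" where
  "jac_weight n \<theta> i k = logistic_deriv (alpha \<theta> i + beta n \<theta> k)"

definition jac_entry :: "nat \<Rightarrow> real vec \<Rightarrow> nat \<Rightarrow> nat \<Rightarrow> real" where
  "jac_entry n \<theta> i j = (if i < n then
      (if j = i then - (\<Sum>k\<in>{k. k < n \<and> k \<noteq> i}. jac_weight n \<theta> i k)
       else if n \<le> j \<and> j - n \<noteq> i then - jac_weight n \<theta> i (j - n) else 0)
    else
      (if j = i then - (\<Sum>k\<in>{k. k < n \<and> k \<noteq> i - n}. jac_weight n \<theta> k (i - n))
       else if j < n \<and> j \<noteq> i - n then - jac_weight n \<theta> j (i - n) else 0))"

lemma alpha_vupd: "i < dim_vec \<theta> \<Longrightarrow> alpha (vupd \<theta> j t) i = (if i = j then t else \<theta> $ i)"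
  unfolding alpha_def vupd_def by simp

lemma beta_vupd: "dim_vec \<theta> = 2 * n - 1 \<Longrightarrow>
   beta n (vupd \<theta> j t) k = (if k < n - 1 then (if n + k = j then t else \<theta> $ (n + k)) else 0)"
  unfolding beta_def vupd_def by auto

lemma vupd_same: "j < dim_vec \<theta> \<Longrightarrow> vupd \<theta> j (\<theta> $ j) = \<theta>"
  unfolding vupd_def by (intro eq_vecI) auto

lemma DERIV_summand:
  assumes "i < dim_vec \<theta>" "dim_vec \<theta> = 2 * n - 1"
  shows "DERIV (\<lambda>t. logistic (alpha (vupd \<theta> j t) i + beta n (vupd \<theta> j t) k)) x :>
     logistic_deriv (alpha (vupd \<theta> j x) i + beta n (vupd \<theta> j x) k) *
       ((if i = j then 1 else 0) + (if k < n - 1 \<and> n + k = j then 1 else 0))"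
proof -
  have a: "DERIV (\<lambda>t. alpha (vupd \<theta> j t) i) x :> (if i = j then 1 else 0)"
    using assms(1) by (cases "i = j") (simp_all add: alpha_vupd)
  have b: "DERIV (\<lambda>t. beta n (vupd \<theta> j t) k) x :> (if k < n - 1 \<and> n + k = j then 1 else 0)"
    using assms(2) by (cases "k < n - 1"; cases "n + k = j") (simp_all add: beta_vupd)
  show ?thesis
    using DERIV_chain2[OF DERIV_logistic DERIV_add[OF a b]] by (simp add: o_def)
qed

lemma Jac_entry_alpha_row:
  assumes d: "dim_vec \<theta> = 2 * n - 1" and i: "i < n" and j: "j < 2 * n - 1"
  shows "Jac n A \<theta> $$ (i, j) = jac_entry n \<theta> i j"
proof -
  let ?S = "{k. k < n \<and> k \<noteq> i}"
  let ?ind = "\<lambda>k. (if i = j then 1 else 0) + (if k < n - 1 \<and> n + k = j then 1 else 0) :: real"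
  have F: "(\<lambda>t. Fcomp n A (vupd \<theta> j t) i)
      = (\<lambda>t. outdeg n A i - (\<Sum>k\<in>?S. logistic (alpha (vupd \<theta> j t) i + beta n (vupd \<theta> j t) k)))"
    unfolding Fcomp_def using i by simp
  have "DERIV (\<lambda>t. Fcomp n A (vupd \<theta> j t) i) (\<theta> $ j) :>
      0 - (\<Sum>k\<in>?S. logistic_deriv (alpha (vupd \<theta> j (\<theta> $ j)) i + beta n (vupd \<theta> j (\<theta> $ j)) k) * ?ind k)"
    unfolding F using i d by (intro DERIV_diff DERIV_const DERIV_sum DERIV_summand) auto
  then have D: "Jac n A \<theta> $$ (i, j) = - (\<Sum>k\<in>?S. jac_weight n \<theta> i k * ?ind k)"
    unfolding Jac_def jac_weight_def using i j d vupd_same[of j \<theta>] by (simp add: DERIV_imp_deriv)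
  show ?thesis
  proof (cases "j = i")
    case True
    then show ?thesis unfolding D jac_entry_def using i by (auto intro!: sum.cong)
  next
    case False
    have "(\<Sum>k\<in>?S. jac_weight n \<theta> i k * ?ind k) = (\<Sum>k\<in>?S. if k = j - n \<and> n \<le> j then jac_weight n \<theta> i k else 0)"
      using False j by (intro sum.cong) auto
    also have "\<dots> = (if n \<le> j \<and> j - n \<noteq> i then jac_weight n \<theta> i (j - n) else 0)"
      using j by (auto simp: sum.delta')
    finally show ?thesis unfolding D jac_entry_def using i False by auto
  qed
qed

lemma Jac_entry_beta_row:
  assumes d: "dim_vec \<theta> = 2 * n - 1" and i: "n \<le> i" "i < 2 * n - 1" and j: "j < 2 * n - 1"
  shows "Jac n A \<theta> $$ (i, j) = jac_entry n \<theta> i j"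
proof -
  let ?S = "{k. k < n \<and> k \<noteq> i - n}"
  let ?ind = "\<lambda>k. (if k = j then 1 else 0) + (if i - n < n - 1 \<and> n + (i - n) = j then 1 else 0) :: real"
  have F: "(\<lambda>t. Fcomp n A (vupd \<theta> j t) i)
      = (\<lambda>t. indeg n A (i - n) - (\<Sum>k\<in>?S. logistic (alpha (vupd \<theta> j t) k + beta n (vupd \<theta> j t) (i - n))))"
    unfolding Fcomp_def using i by simp
  have "DERIV (\<lambda>t. Fcomp n A (vupd \<theta> j t) i) (\<theta> $ j) :>
      0 - (\<Sum>k\<in>?S. logistic_deriv (alpha (vupd \<theta> j (\<theta> $ j)) k + beta n (vupd \<theta> j (\<theta> $ j)) (i - n)) * ?ind k)"
    unfolding F using i d by (intro DERIV_diff DERIV_const DERIV_sum DERIV_summand) auto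
  then have D: "Jac n A \<theta> $$ (i, j) = - (\<Sum>k\<in>?S. jac_weight n \<theta> k (i - n) * ?ind k)"
    unfolding Jac_def jac_weight_def using i j d vupd_same[of j \<theta>] by (simp add: DERIV_imp_deriv)
  show ?thesis
  proof (cases "j = i")
    case True
    then show ?thesis unfolding D jac_entry_def using i by (auto intro!: sum.cong)
  next
    case False
    have "(\<Sum>k\<in>?S. jac_weight n \<theta> k (i - n) * ?ind k) = (\<Sum>k\<in>?S. if k = j then jac_weight n \<theta> k (i - n) else 0)"
      using False i by (intro sum.cong) auto
    also have "\<dots> = (if j < n \<and> j \<noteq> i - n then jac_weight n \<theta> j (i - n) else 0)"
      by (auto simp: sum.delta')
    finally show ?thesis unfolding D jac_entry_def using i False by auto
  qed
qed

lemma Jac_entry: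
  assumes "dim_vec \<theta> = 2 * n - 1" "i < 2 * n - 1" "j < 2 * n - 1"
  shows "Jac n A \<theta> $$ (i, j) = jac_entry n \<theta> i j"
  using Jac_entry_alpha_row[OF assms(1) _ assms(3)] Jac_entry_beta_row[OF assms(1) _ assms(2,3)]
  by (cases "i < n") auto

lemma Jac_carrier: "Jac n A \<theta> \<in> carrier_mat (2 * n - 1) (2 * n - 1)"
  unfolding Jac_def by simp

lemma Jac_dims [simp]: "dim_row (Jac n A \<theta>) = 2 * n - 1" "dim_col (Jac n A \<theta>) = 2 * n - 1"
  unfolding Jac_def by simp_all


text \<open>The negated beta-block of a vector, padded by \<open>w_{n-1} = 0\<close> (the normalisation \<open>beta_n = 0\<close>).
  With it every row of \<open>F'(theta) z\<close> becomes a weighted sum of differences.\<close>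

definition neg_beta_part :: "nat \<Rightarrow> real vec \<Rightarrow> nat \<Rightarrow> real" where
  "neg_beta_part n z k = (if k < n - 1 then - z $ (n + k) else 0)"

lemma Jac_mult_vec_nth:
  assumes "dim_vec \<theta> = 2 * n - 1" "i < 2 * n - 1" "dim_vec z = 2 * n - 1"
  shows "(Jac n A \<theta> *\<^sub>v z) $ i = (\<Sum>j<2 * n - 1. jac_entry n \<theta> i j * z $ j)"
  using assms Jac_entry[OF assms(1,2)]
  by (auto simp: scalar_prod_def lessThan_atLeast0 intro!: sum.cong)

lemma sum_alpha_row_pattern:
  fixes n :: nat
  assumes "i < n"
  shows "(\<Sum>j<2*n-1. if j = i then a else if n \<le> j \<and> j - n \<noteq> i then b (j - n) else 0)
     = a + (\<Sum>k\<in>{k. k < n - 1 \<and> k \<noteq> i}. b k)" (is "?L = _")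
proof -
  have "2 * n - 1 = n + (n - 1)" using assms by simp
  then have "?L = (\<Sum>j<n. if j = i then a else if n \<le> j \<and> j - n \<noteq> i then b (j - n) else 0)
     + (\<Sum>k<n-1. if n + k = i then a else if n \<le> n + k \<and> n + k - n \<noteq> i then b (n + k - n) else 0)"
    by (simp only: sum_lessThan_add)
  also have "(\<Sum>j<n. if j = i then a else if n \<le> j \<and> j - n \<noteq> i then b (j - n) else 0) = a"
    using assms by (simp add: sum.delta cong: if_cong)
  also have "(\<Sum>k<n-1. if n + k = i then a else if n \<le> n + k \<and> n + k - n \<noteq> i then b (n + k - n) else 0)
      = (\<Sum>k\<in>{k. k < n - 1 \<and> k \<noteq> i}. b k)"
    using assms by (simp add: sum.inter_filter[symmetric] conj_commute)
  finally show ?thesis .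
qed

lemma sum_beta_row_pattern:
  fixes n :: nat
  assumes "n \<le> i" "i < 2 * n - 1"
  shows "(\<Sum>j<2*n-1. if j = i then a else if j < n \<and> j \<noteq> i - n then b j else 0)
     = a + (\<Sum>k\<in>{k. k < n \<and> k \<noteq> i - n}. b k)" (is "?L = _")
proof -
  have "2 * n - 1 = n + (n - 1)" using assms by simp
  then have "?L = (\<Sum>j<n. if j = i then a else if j < n \<and> j \<noteq> i - n then b j else 0)
     + (\<Sum>k<n-1. if n + k = i then a else if n + k < n \<and> n + k \<noteq> i - n then b (n + k) else 0)"
    by (simp only: sum_lessThan_add)
  also have "(\<Sum>j<n. if j = i then a else if j < n \<and> j \<noteq> i - n then b j else 0)
     = (\<Sum>k\<in>{k. k < n \<and> k \<noteq> i - n}. b k)"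
    using assms by (simp add: sum.inter_filter[symmetric] conj_commute)
  also have "(\<Sum>k<n-1. if n + k = i then a else if n + k < n \<and> n + k \<noteq> i - n then b (n + k) else 0)
      = (\<Sum>k<n-1. if k = i - n then a else 0)"
    using assms by (intro sum.cong) auto
  also have "\<dots> = a" using assms by (subgoal_tac "i - n < n - 1") (simp_all add: sum.delta)
  finally show ?thesis by (simp add: add.commute)
qed

lemma Jac_mult_alpha_row:
  assumes n: "n \<ge> 2" and d: "dim_vec \<theta> = 2 * n - 1" and i: "i < n" and dz: "dim_vec z = 2 * n - 1"
  shows "(Jac n A \<theta> *\<^sub>v z) $ i
           = - (\<Sum>k\<in>{k. k < n \<and> k \<noteq> i}. jac_weight n \<theta> i k * (z $ i - neg_beta_part n z k))"
proof -
  let ?S = "{k. k < n \<and> k \<noteq> i}" and ?u = "jac_weight n \<theta> i" and ?w = "neg_beta_part n z"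
  have i': "i < 2 * n - 1" using i by simp
  have "(Jac n A \<theta> *\<^sub>v z) $ i = (\<Sum>j<2*n-1. if j = i then (- (\<Sum>k\<in>?S. ?u k)) * z $ i
      else if n \<le> j \<and> j - n \<noteq> i then (\<lambda>k. - ?u k * z $ (n + k)) (j - n) else 0)"
    unfolding Jac_mult_vec_nth[OF d i' dz] jac_entry_def using i n by (intro sum.cong) auto
  also have "\<dots> = (- (\<Sum>k\<in>?S. ?u k)) * z $ i + (\<Sum>k\<in>{k. k < n - 1 \<and> k \<noteq> i}. - ?u k * z $ (n + k))"
    by (rule sum_alpha_row_pattern[OF i])
  also have "(\<Sum>k\<in>{k. k < n - 1 \<and> k \<noteq> i}. - ?u k * z $ (n + k)) = (\<Sum>k\<in>?S. ?u k * ?w k)"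
  proof -
    have "(\<Sum>k\<in>?S. ?u k * ?w k) = (\<Sum>k<n - 1. if k \<noteq> i then ?u k * ?w k else 0)"
      unfolding sum_punctured using n by (subst sum_lessThan_last) (auto simp: neg_beta_part_def)
    also have "\<dots> = (\<Sum>k\<in>{k. k < n - 1 \<and> k \<noteq> i}. - ?u k * z $ (n + k))"
      unfolding sum_punctured by (intro sum.cong) (auto simp: neg_beta_part_def)
    finally show ?thesis by simp
  qed
  finally show ?thesis by (simp add: right_diff_distrib sum_subtractf sum_distrib_right)
qed

lemma Jac_mult_beta_row:
  assumes n: "n \<ge> 2" and d: "dim_vec \<theta> = 2 * n - 1" and j: "j < n - 1" and dz: "dim_vec z = 2 * n - 1"
  shows "(Jac n A \<theta> *\<^sub>v z) $ (n + j)
           = (\<Sum>k\<in>{k. k < n \<and> k \<noteq> j}. jac_weight n \<theta> k j * (neg_beta_part n z j - z $ k))"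
proof -
  let ?S = "{k. k < n \<and> k \<noteq> j}"
  have i: "n + j < 2 * n - 1" using j n by auto
  have "(Jac n A \<theta> *\<^sub>v z) $ (n + j) = (\<Sum>l<2*n-1. if l = n + j then (- (\<Sum>k\<in>?S. jac_weight n \<theta> k j)) * z $ (n + j)
      else if l < n \<and> l \<noteq> n + j - n then (\<lambda>k. - jac_weight n \<theta> k j * z $ k) l else 0)"
    unfolding Jac_mult_vec_nth[OF d i dz] jac_entry_def by (intro sum.cong) auto
  also have "\<dots> = (- (\<Sum>k\<in>?S. jac_weight n \<theta> k j)) * z $ (n + j)
                     + (\<Sum>k\<in>{k. k < n \<and> k \<noteq> n + j - n}. - jac_weight n \<theta> k j * z $ k)"
    using i by (intro sum_beta_row_pattern) auto
  finally show ?thesis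
    using j by (simp add: neg_beta_part_def right_diff_distrib sum_subtractf sum_distrib_right sum_negf)
qed


section \<open>Part (a): Lipschitz estimates for the Jacobian\<close>

text \<open>Each weight moves by at most half the max-norm distance of the parameters, since both
  \<open>alpha_i\<close> and \<open>beta_k\<close> move by at most that distance and \<open>f'\<close> is \<open>1/4\<close>-Lipschitz.\<close>

lemma jac_weight_lipschitz:
  assumes d: "dim_vec x = 2 * n - 1" "dim_vec y = 2 * n - 1" and i: "i < n"
  shows "\<bar>jac_weight n x i k - jac_weight n y i k\<bar> \<le> linf (x - y) / 2"
proof -
  have comp: "\<bar>x $ l - y $ l\<bar> \<le> linf (x - y)" if "l < 2 * n - 1" for l
    using linf_ge[of l "x - y"] that d by simp
  have a: "\<bar>alpha x i - alpha y i\<bar> \<le> linf (x - y)"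
    unfolding alpha_def using comp i by simp
  have b: "\<bar>beta n x k - beta n y k\<bar> \<le> linf (x - y)"
    unfolding beta_def using comp[of "n + k"] linf_nonneg[of "x - y"] by auto
  have "\<bar>jac_weight n x i k - jac_weight n y i k\<bar>
          \<le> \<bar>(alpha x i + beta n x k) - (alpha y i + beta n y k)\<bar> / 4"
    unfolding jac_weight_def by (rule logistic_deriv_lipschitz)
  also have "\<dots> \<le> (2 * linf (x - y)) / 4" using a b by (intro divide_right_mono) auto
  finally show ?thesis by simp
qed

lemma neg_beta_part_le: "dim_vec z = 2 * n - 1 \<Longrightarrow> \<bar>neg_beta_part n z k\<bar> \<le> linf z"
  unfolding neg_beta_part_def using linf_ge[of "n + k" z] linf_nonneg[of z] by auto

text \<open>First estimate of (a): by the row formulas, each row of \<open>[F'(x) - F'(y)] v\<close> is a sum of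
  \<open>n - 1\<close> products (weight difference) * (difference of two entries of \<open>v\<close>).\<close>

lemma Jac_diff_mult_bound:
  assumes n: "n \<ge> 2" and d: "dim_vec x = 2 * n - 1" "dim_vec y = 2 * n - 1" "dim_vec v = 2 * n - 1"
  shows "linf ((Jac n A x - Jac n A y) *\<^sub>v v) \<le> (real n - 1) * linf (x - y) * linf v"
proof (rule linf_le)
  let ?d = "linf (x - y)" and ?w = "neg_beta_part n v"
  show "0 \<le> (real n - 1) * ?d * linf v" using n linf_nonneg[of "x - y"] linf_nonneg[of v] by simp
  fix i assume "i < dim_vec ((Jac n A x - Jac n A y) *\<^sub>v v)"
  then have i: "i < 2 * n - 1" by simp
  have "v \<in> carrier_vec (2 * n - 1)" using d(3) by (rule carrier_vecI)
  then have "(Jac n A x - Jac n A y) *\<^sub>v v = Jac n A x *\<^sub>v v - Jac n A y *\<^sub>v v"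
    by (rule minus_mult_distrib_mat_vec[OF Jac_carrier Jac_carrier])
  then have diff: "((Jac n A x - Jac n A y) *\<^sub>v v) $ i = (Jac n A x *\<^sub>v v) $ i - (Jac n A y *\<^sub>v v) $ i"
    using i by simp
  have vdiff: "\<bar>a - b\<bar> \<le> 2 * linf v" if "\<bar>a\<bar> \<le> linf v" "\<bar>b\<bar> \<le> linf v" for a b :: real
    using that by linarith
  have termwise: "\<bar>(jac_weight n y a b - jac_weight n x a b) * c\<bar> \<le> ?d / 2 * (2 * linf v)"
    if "a < n" "\<bar>c\<bar> \<le> 2 * linf v" for a b c
  proof -
    have "\<bar>jac_weight n x a b - jac_weight n y a b\<bar> * \<bar>c\<bar> \<le> ?d / 2 * (2 * linf v)"
      by (rule mult_mono[OF jac_weight_lipschitz[OF d(1,2) that(1)] that(2)]) (simp_all add: linf_nonneg)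
    then show ?thesis by (simp add: abs_mult abs_minus_commute)
  qed
  have "\<bar>((Jac n A x - Jac n A y) *\<^sub>v v) $ i\<bar> \<le> real (n - 1) * (?d / 2 * (2 * linf v))"
  proof (cases "i < n")
    case True
    let ?S = "{k. k < n \<and> k \<noteq> i}"
    have "((Jac n A x - Jac n A y) *\<^sub>v v) $ i
            = (\<Sum>k\<in>?S. (jac_weight n y i k - jac_weight n x i k) * (v $ i - ?w k))"
      unfolding diff Jac_mult_alpha_row[OF n d(1) True d(3)] Jac_mult_alpha_row[OF n d(2) True d(3)]
      by (simp add: sum_subtractf[symmetric] left_diff_distrib)
    also have "\<bar>\<dots>\<bar> \<le> real (card ?S) * (?d / 2 * (2 * linf v))"
      using True i d(3) linf_ge[of i v] neg_beta_part_le[OF d(3)]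
      by (intro abs_sum_le_card termwise vdiff) auto
    finally show ?thesis using card_punctured[OF True] by simp
  next
    case False
    define j where "j = i - n"
    have j: "j < n - 1" "i = n + j" using i False unfolding j_def by auto
    let ?S = "{k. k < n \<and> k \<noteq> j}"
    have "((Jac n A x - Jac n A y) *\<^sub>v v) $ i
            = (\<Sum>k\<in>?S. (jac_weight n x k j - jac_weight n y k j) * (?w j - v $ k))"
      unfolding j(2) diff[unfolded j(2)] Jac_mult_beta_row[OF n d(1) j(1) d(3)] Jac_mult_beta_row[OF n d(2) j(1) d(3)]
      by (simp add: sum_subtractf[symmetric] left_diff_distrib)
    also have "\<bar>\<dots>\<bar> \<le> real (card ?S) * (?d / 2 * (2 * linf v))"
    proof (intro abs_sum_le_card)
      fix k assume k: "k \<in> ?S"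
      have "\<bar>(jac_weight n y k j - jac_weight n x k j) * (?w j - v $ k)\<bar> \<le> ?d / 2 * (2 * linf v)"
        using k d(3) linf_ge[of k v] neg_beta_part_le[OF d(3)] by (intro termwise vdiff) auto
      then show "\<bar>(jac_weight n x k j - jac_weight n y k j) * (?w j - v $ k)\<bar> \<le> ?d / 2 * (2 * linf v)"
        by (simp add: abs_mult abs_minus_commute)
    qed
    finally show ?thesis using card_punctured[of j n] j by simp
  qed
  then show "\<bar>((Jac n A x - Jac n A y) *\<^sub>v v) $ i\<bar> \<le> (real n - 1) * ?d * linf v"
    using n by (simp add: of_nat_diff)
qed

text \<open>Second estimate of (a): a diagonal entry changes by a sum of \<open>n - 1\<close> weight changes, an
  off-diagonal entry by a single one.\<close>

lemma jac_entry_diff_bound: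
  assumes n: "n \<ge> 2" and d: "dim_vec x = 2 * n - 1" "dim_vec y = 2 * n - 1" and i: "i < 2 * n - 1"
  shows "\<bar>jac_entry n x i j - jac_entry n y i j\<bar> \<le> (real n - 1) / 2 * linf (x - y)"
proof -
  let ?d = "linf (x - y)"
  have single: "\<bar>jac_weight n x a k - jac_weight n y a k\<bar> \<le> (real n - 1) / 2 * ?d" if "a < n" for a k
  proof -
    have "?d / 2 \<le> (real n - 1) / 2 * ?d" using n linf_nonneg[of "x - y"] mult_right_mono[of 1 "real n - 1" ?d] by simp
    then show ?thesis using jac_weight_lipschitz[OF d that, of k] by linarith
  qed
  have diag: "\<bar>(\<Sum>k\<in>{k. k < n \<and> k \<noteq> a}. g x k - g y k)\<bar> \<le> (real n - 1) / 2 * ?d"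
    if "a < n" "\<And>k. k < n \<Longrightarrow> \<bar>g x k - g y k\<bar> \<le> ?d / 2" for a and g :: "real vec \<Rightarrow> nat \<Rightarrow> real"
    using abs_sum_le_card[of "{k. k < n \<and> k \<noteq> a}" "\<lambda>k. g x k - g y k" "?d / 2"] that
      card_punctured[OF that(1)] n by (simp add: of_nat_diff)
  have nonneg: "0 \<le> (real n - 1) / 2 * ?d" using n linf_nonneg[of "x - y"] by simp
  show ?thesis
  proof (cases "i < n")
    case True
    have "\<bar>(\<Sum>k\<in>{k. k < n \<and> k \<noteq> i}. jac_weight n x i k - jac_weight n y i k)\<bar> \<le> (real n - 1) / 2 * ?d"
      using True jac_weight_lipschitz[OF d True] by (intro diag)
    then show ?thesis
      unfolding jac_entry_def using True single[OF True] nonneg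
      by (auto simp: sum_subtractf abs_minus_commute)
  next
    case False
    then have j: "i - n < n" using i by auto
    have "\<bar>(\<Sum>k\<in>{k. k < n \<and> k \<noteq> i - n}. jac_weight n x k (i - n) - jac_weight n y k (i - n))\<bar>
            \<le> (real n - 1) / 2 * ?d"
      using j jac_weight_lipschitz[OF d] by (intro diag)
    then show ?thesis
      unfolding jac_entry_def using False single nonneg
      by (auto simp: sum_subtractf abs_minus_commute)
  qed
qed

lemma Jac_row_diff_bound:
  assumes n: "n \<ge> 2" and d: "dim_vec x = 2 * n - 1" "dim_vec y = 2 * n - 1" and i: "i < 2 * n - 1"
  shows "linf (row (Jac n A x) i - row (Jac n A y) i) \<le> (real n - 1) / 2 * linf (x - y)"
proof (rule linf_le)
  show "0 \<le> (real n - 1) / 2 * linf (x - y)" using n linf_nonneg[of "x - y"] by simp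
  fix j assume "j < dim_vec (row (Jac n A x) i - row (Jac n A y) i)"
  then have j: "j < 2 * n - 1" by simp
  show "\<bar>(row (Jac n A x) i - row (Jac n A y) i) $ j\<bar> \<le> (real n - 1) / 2 * linf (x - y)"
    using Jac_entry[OF d(1) i j] Jac_entry[OF d(2) i j] i j jac_entry_diff_bound[OF n d i] by simp
qed

section \<open>Part (b): a discrete maximum principle\<close>

lemma convex_comb_bounds:
  fixes p y :: "nat \<Rightarrow> real" and n :: nat
  assumes "\<And>k. k < n \<Longrightarrow> 0 \<le> p k" "(\<Sum>k<n. p k) = 1" "\<And>k. k < n \<Longrightarrow> lo \<le> y k \<and> y k \<le> hi"
  shows "lo \<le> (\<Sum>k<n. p k * y k)" "(\<Sum>k<n. p k * y k) \<le> hi"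
proof -
  have "(\<Sum>k<n. p k * lo) \<le> (\<Sum>k<n. p k * y k)" using assms by (intro sum_mono mult_left_mono) auto
  then show "lo \<le> (\<Sum>k<n. p k * y k)" using assms(2) by (simp add: sum_distrib_right[symmetric])
  have "(\<Sum>k<n. p k * y k) \<le> (\<Sum>k<n. p k * hi)" using assms by (intro sum_mono mult_left_mono) auto
  then show "(\<Sum>k<n. p k * y k) \<le> hi" using assms(2) by (simp add: sum_distrib_right[symmetric])
qed

lemma convex_comb_diff_bound:
  fixes p q y :: "nat \<Rightarrow> real" and n :: nat
  assumes "\<And>k. k < n \<Longrightarrow> 0 \<le> p k" "(\<Sum>k<n. p k) = 1"
    "\<And>k. k < n \<Longrightarrow> 0 \<le> q k" "(\<Sum>k<n. q k) = 1"
    "\<And>k. k < n \<Longrightarrow> lo \<le> y k \<and> y k \<le> hi"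
  shows "(\<Sum>k<n. p k * y k) - (\<Sum>k<n. q k * y k) \<le> (1 - (\<Sum>k<n. min (p k) (q k))) * (hi - lo)"
proof -
  let ?s = "\<Sum>k<n. min (p k) (q k)"
  have a: "(\<Sum>k<n. (p k - min (p k) (q k)) * y k) \<le> (\<Sum>k<n. (p k - min (p k) (q k)) * hi)"
    using assms by (intro sum_mono mult_left_mono) auto
  have b: "(\<Sum>k<n. (q k - min (p k) (q k)) * lo) \<le> (\<Sum>k<n. (q k - min (p k) (q k)) * y k)"
    using assms by (intro sum_mono mult_left_mono) auto
  have "(\<Sum>k<n. p k * y k) - (\<Sum>k<n. q k * y k) =
     (\<Sum>k<n. (p k - min (p k) (q k)) * y k) - (\<Sum>k<n. (q k - min (p k) (q k)) * y k)"
    by (simp add: sum_subtractf[symmetric] algebra_simps)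
  also have "\<dots> \<le> (\<Sum>k<n. (p k - min (p k) (q k)) * hi) - (\<Sum>k<n. (q k - min (p k) (q k)) * lo)"
    using a b by linarith
  also have "\<dots> = (1 - ?s) * hi - (1 - ?s) * lo"
  proof -
    have "(\<Sum>k<n. (p k - min (p k) (q k)) * hi) = (1 - ?s) * hi"
      using assms(2) by (simp add: sum_distrib_right[symmetric] sum_subtractf)
    moreover have "(\<Sum>k<n. (q k - min (p k) (q k)) * lo) = (1 - ?s) * lo"
      using assms(4) by (simp add: sum_distrib_right[symmetric] sum_subtractf)
    ultimately show ?thesis by simp
  qed
  finally show ?thesis by (simp add: algebra_simps)
qed

text \<open>One half of the bipartite system: values \<open>f i\<close> nearly balance the values \<open>g k\<close> under weights
  in \<open>[m, M]\<close>.  Then every \<open>f i\<close> is, up to \<open>avg_err\<close>, a convex combination of the \<open>g k\<close>, and any two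
  of these combinations share mass at least \<open>m / (2M)\<close>, so the oscillation contracts.\<close>

locale averaging_system =
  fixes n :: nat and a :: "nat \<Rightarrow> nat \<Rightarrow> real" and m M \<epsilon> :: real and f g :: "nat \<Rightarrow> real"
  assumes n3: "n \<ge> 3" and mpos: "m > 0" and mM: "m \<le> M"
    and weight_bounds: "\<And>i k. i < n \<Longrightarrow> k < n \<Longrightarrow> i \<noteq> k \<Longrightarrow> m \<le> a i k \<and> a i k \<le> M"
    and near_balance: "\<And>i. i < n \<Longrightarrow> \<bar>\<Sum>k\<in>{k. k < n \<and> k \<noteq> i}. a i k * (f i - g k)\<bar> \<le> \<epsilon>"
begin

definition weight_sum :: "nat \<Rightarrow> real" where
  "weight_sum i = (\<Sum>k\<in>{k. k < n \<and> k \<noteq> i}. a i k)"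

definition weight_prob :: "nat \<Rightarrow> nat \<Rightarrow> real" where
  "weight_prob i k = (if k \<noteq> i then a i k / weight_sum i else 0)"

definition avg_err :: real where
  "avg_err = \<epsilon> / ((real n - 1) * m)"

definition gmax :: real where
  "gmax = Max (g ` {..<n})"

definition gmin :: real where
  "gmin = Min (g ` {..<n})"

lemma n_pos: "0 < n"
  using n3 by auto

lemma g_range: "k < n \<Longrightarrow> gmin \<le> g k \<and> g k \<le> gmax"
  unfolding gmax_def gmin_def by auto

lemma weight_sum_lower: "i < n \<Longrightarrow> (real n - 1) * m \<le> weight_sum i"
proof -
  assume i: "i < n"
  have "(\<Sum>k\<in>{k. k < n \<and> k \<noteq> i}. m) \<le> weight_sum i"
    unfolding weight_sum_def using weight_bounds i by (intro sum_mono) auto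
  then show ?thesis using card_punctured[OF i] n3 by (simp add: of_nat_diff)
qed

lemma weight_sum_upper: "i < n \<Longrightarrow> weight_sum i \<le> (real n - 1) * M"
proof -
  assume i: "i < n"
  have "weight_sum i \<le> (\<Sum>k\<in>{k. k < n \<and> k \<noteq> i}. M)"
    unfolding weight_sum_def using weight_bounds i by (intro sum_mono) auto
  then show ?thesis using card_punctured[OF i] n3 by (simp add: of_nat_diff)
qed

lemma min_weight_sum_pos: "0 < (real n - 1) * m"
  using n3 mpos by simp

lemma weight_sum_pos: "i < n \<Longrightarrow> 0 < weight_sum i"
  using weight_sum_lower min_weight_sum_pos by (meson less_le_trans)

lemma weight_prob_nonneg: "i < n \<Longrightarrow> k < n \<Longrightarrow> 0 \<le> weight_prob i k"
  unfolding weight_prob_def using weight_bounds[of i k] weight_sum_pos[of i] mpos by auto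

lemma weight_prob_sum: "i < n \<Longrightarrow> (\<Sum>k<n. weight_prob i k) = 1"
proof -
  assume i: "i < n"
  have "(\<Sum>k<n. weight_prob i k) = (\<Sum>k<n. (if k \<noteq> i then a i k else 0) / weight_sum i)"
    unfolding weight_prob_def by (intro sum.cong) auto
  also have "\<dots> = (\<Sum>k<n. if k \<noteq> i then a i k else 0) / weight_sum i"
    by (simp add: sum_divide_distrib)
  also have "\<dots> = 1" using weight_sum_pos[OF i] unfolding weight_sum_def sum_punctured by simp
  finally show ?thesis .
qed

lemma eps_nonneg: "0 \<le> \<epsilon>"
  using near_balance[of 0] n_pos by linarith

lemma avg_err_nonneg: "0 \<le> avg_err"
  unfolding avg_err_def using eps_nonneg min_weight_sum_pos by simp

text \<open>Dividing the balance equation of row \<open>i\<close> by its total weight: \<open>f i\<close> is an average of the \<open>g k\<close>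
  up to \<open>eps / weight_sum i \<le> avg_err\<close>.\<close>

lemma f_near_average: "i < n \<Longrightarrow> \<bar>f i - (\<Sum>k<n. weight_prob i k * g k)\<bar> \<le> avg_err"
proof -
  assume i: "i < n"
  let ?r = "\<Sum>k\<in>{k. k < n \<and> k \<noteq> i}. a i k * (f i - g k)"
  have r: "?r = f i * weight_sum i - (\<Sum>k<n. if k \<noteq> i then a i k * g k else 0)"
  proof -
    have "?r = (\<Sum>k<n. (if k \<noteq> i then a i k * f i else 0) - (if k \<noteq> i then a i k * g k else 0))"
      unfolding sum_punctured by (intro sum.cong) (auto simp: algebra_simps)
    also have "\<dots> = (\<Sum>k<n. (if k \<noteq> i then a i k else 0) * f i)
                     - (\<Sum>k<n. if k \<noteq> i then a i k * g k else 0)"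
      unfolding sum_subtractf by (intro arg_cong2[where f="(-)"] sum.cong) auto
    also have "\<dots> = f i * weight_sum i - (\<Sum>k<n. if k \<noteq> i then a i k * g k else 0)"
      unfolding weight_sum_def sum_punctured sum_distrib_right[symmetric] by simp
    finally show ?thesis .
  qed
  have s: "(\<Sum>k<n. weight_prob i k * g k)
             = (\<Sum>k<n. if k \<noteq> i then a i k * g k else 0) / weight_sum i"
  proof -
    have "(\<Sum>k<n. weight_prob i k * g k)
            = (\<Sum>k<n. (if k \<noteq> i then a i k * g k else 0) / weight_sum i)"
      unfolding weight_prob_def by (intro sum.cong) auto
    then show ?thesis by (simp add: sum_divide_distrib)
  qed
  have "f i - (\<Sum>k<n. weight_prob i k * g k) = ?r / weight_sum i"
    unfolding s r using weight_sum_pos[OF i] by (simp add: field_simps)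
  then have "\<bar>f i - (\<Sum>k<n. weight_prob i k * g k)\<bar> = \<bar>?r\<bar> / weight_sum i"
    using weight_sum_pos[OF i] by simp
  also have "\<dots> \<le> \<epsilon> / weight_sum i"
    using near_balance[OF i] weight_sum_pos[OF i] by (intro divide_right_mono) auto
  also have "\<dots> \<le> \<epsilon> / ((real n - 1) * m)"
    using weight_sum_lower[OF i] min_weight_sum_pos eps_nonneg by (intro divide_left_mono) auto
  finally show ?thesis unfolding avg_err_def .
qed

lemma f_range: "i < n \<Longrightarrow> gmin - avg_err \<le> f i \<and> f i \<le> gmax + avg_err"
  using f_near_average[of i] convex_comb_bounds[of n "weight_prob i" gmin g gmax]
    weight_prob_nonneg weight_prob_sum g_range
  by fastforce

text \<open>Each probability is at least \<open>m / ((n - 1) M)\<close>, and two rows share all but at most two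
  columns; since \<open>n \<ge> 3\<close> the common mass is at least \<open>m / (2M)\<close>.\<close>

lemma weight_prob_overlap:
  "i < n \<Longrightarrow> i' < n \<Longrightarrow> m / (2 * M) \<le> (\<Sum>k<n. min (weight_prob i k) (weight_prob i' k))"
proof -
  assume i: "i < n" and i': "i' < n"
  let ?c = "m / ((real n - 1) * M)"
  have Mpos: "0 < M" using mpos mM by linarith
  have c0: "0 \<le> ?c" using mpos Mpos n3 by simp
  have lowP: "?c \<le> weight_prob j k" if "j < n" "k < n" "k \<noteq> j" for j k
  proof -
    have "m / ((real n - 1) * M) \<le> m / weight_sum j"
      using weight_sum_upper[OF that(1)] weight_sum_pos[OF that(1)] mpos by (intro divide_left_mono) auto
    also have "\<dots> \<le> a j k / weight_sum j"
      using weight_bounds[OF that(1,2)] that weight_sum_pos[OF that(1)] by (intro divide_right_mono) auto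
    finally show ?thesis unfolding weight_prob_def using that by simp
  qed
  have "(\<Sum>k<n. if k \<noteq> i \<and> k \<noteq> i' then ?c else 0)
          \<le> (\<Sum>k<n. min (weight_prob i k) (weight_prob i' k))"
    using lowP i i' weight_prob_nonneg by (intro sum_mono) auto
  moreover have "(\<Sum>k<n. if k \<noteq> i \<and> k \<noteq> i' then ?c else 0) = ?c * real (card ({..<n} - {i, i'}))"
    by (subst sum.If_cases) (auto simp: Int_def set_diff_eq mult.commute)
  moreover have "real (card ({..<n} - {i, i'})) \<ge> real n - 2"
  proof -
    have "card ({..<n} - {i, i'}) \<ge> card {..<n} - card {i, i'}" by (rule diff_card_le_card_Diff) auto
    moreover have "card {i, i'} \<le> 2" by (simp add: card_insert_le_m1)
    ultimately show ?thesis by simp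
  qed
  ultimately have "?c * (real n - 2) \<le> (\<Sum>k<n. min (weight_prob i k) (weight_prob i' k))"
    using c0 mult_left_mono[of "real n - 2" "real (card ({..<n} - {i, i'}))" ?c] by linarith
  moreover have "m / (2 * M) \<le> ?c * (real n - 2)"
  proof -
    have "?c * (real n - 2) = (m / M) * ((real n - 2) / (real n - 1))" using n3 by (simp add: field_simps)
    moreover have "1/2 \<le> (real n - 2) / (real n - 1)" using n3 by (simp add: field_simps)
    moreover have "m / (2 * M) = (m / M) * (1/2)" by simp
    ultimately show ?thesis using mpos Mpos by (metis divide_nonneg_nonneg less_le mult_left_mono)
  qed
  ultimately show ?thesis by linarith
qed

lemma oscillation_step:
  "i < n \<Longrightarrow> i' < n \<Longrightarrow> f i - f i' \<le> (1 - m / (2 * M)) * (gmax - gmin) + 2 * avg_err"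
proof -
  assume i: "i < n" and i': "i' < n"
  have "(\<Sum>k<n. weight_prob i k * g k) - (\<Sum>k<n. weight_prob i' k * g k)
          \<le> (1 - (\<Sum>k<n. min (weight_prob i k) (weight_prob i' k))) * (gmax - gmin)"
    using convex_comb_diff_bound[of n "weight_prob i" "weight_prob i'" gmin g gmax]
      weight_prob_nonneg weight_prob_sum g_range i i'
    by blast
  also have "\<dots> \<le> (1 - m / (2 * M)) * (gmax - gmin)"
    using weight_prob_overlap[OF i i'] g_range[of 0] n_pos by (intro mult_right_mono) auto
  finally show ?thesis using f_near_average[OF i] f_near_average[OF i'] by (auto simp: abs_le_iff)
qed

lemma oscillation_contraction:
  "Max (f ` {..<n}) - Min (f ` {..<n}) \<le> (1 - m / (2 * M)) * (gmax - gmin) + 2 * avg_err"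
proof -
  have ne: "finite {..<n}" "{..<n} \<noteq> {}" using n_pos by auto
  have "Max (f ` {..<n}) \<in> f ` {..<n}" "Min (f ` {..<n}) \<in> f ` {..<n}"
    using ne by (intro Max_in Min_in; simp)+
  then obtain i1 i2 where "i1 < n" "Max (f ` {..<n}) = f i1" "i2 < n" "Min (f ` {..<n}) = f i2"
    by auto
  then show ?thesis using oscillation_step by simp
qed

end

lemma coupled_oscillation_bound:
  fixes ox ow \<rho> E :: real
  assumes "0 < \<rho>" "\<rho> \<le> 1/2" "0 \<le> ox" "0 \<le> ow"
    "ox \<le> (1 - \<rho>) * ow + 2 * E" "ow \<le> (1 - \<rho>) * ox + 2 * E"
  shows "ox \<le> 2 * E / \<rho>"
proof -
  have "(1 - \<rho>) * ow \<le> (1 - \<rho>) * ((1 - \<rho>) * ox + 2 * E)" using assms by (intro mult_left_mono) auto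
  then have "ox \<le> (1 - \<rho>) * ((1 - \<rho>) * ox + 2 * E) + 2 * E" using assms(5) by linarith
  then have "\<rho> * (2 - \<rho>) * ox \<le> 2 * E * (2 - \<rho>)" by (simp add: algebra_simps power2_eq_square)
  then have "(\<rho> * ox) * (2 - \<rho>) \<le> (2 * E) * (2 - \<rho>)" by (simp add: algebra_simps)
  then have "\<rho> * ox \<le> 2 * E" using assms(2) by (simp add: mult_le_cancel_right_pos)
  then show ?thesis using assms(1) by (simp add: field_simps)
qed

lemma bipartite_maximum_principle:
  fixes n :: nat and u :: "nat \<Rightarrow> nat \<Rightarrow> real" and x w :: "nat \<Rightarrow> real" and m M \<epsilon> :: real
  assumes n3: "n \<ge> 3" and mpos: "m > 0" and mM: "m \<le> M"
    and weights: "\<And>i k. i < n \<Longrightarrow> k < n \<Longrightarrow> i \<noteq> k \<Longrightarrow> m \<le> u i k \<and> u i k \<le> M"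
    and w0: "w (n - 1) = 0"
    and balance_x: "\<And>i. i < n \<Longrightarrow> \<bar>\<Sum>k\<in>{k. k < n \<and> k \<noteq> i}. u i k * (x i - w k)\<bar> \<le> \<epsilon>"
    and balance_w: "\<And>j. j < n \<Longrightarrow> \<bar>\<Sum>k\<in>{k. k < n \<and> k \<noteq> j}. u k j * (w j - x k)\<bar> \<le> \<epsilon>"
    and i: "i < n"
  shows "\<bar>x i\<bar> \<le> 5 * (M / m) * (\<epsilon> / ((real n - 1) * m))
     \<and> \<bar>w i\<bar> \<le> 5 * (M / m) * (\<epsilon> / ((real n - 1) * m))"
proof -
  interpret s1: averaging_system n u m M \<epsilon> x w using assms by unfold_locales auto
  interpret s2: averaging_system n "\<lambda>j k. u k j" m M \<epsilon> w x using assms by unfold_locales auto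
  let ?E = "\<epsilon> / ((real n - 1) * m)"
  let ?\<rho> = "m / (2 * M)"
  have E: "s1.avg_err = ?E" "s2.avg_err = ?E" unfolding s1.avg_err_def s2.avg_err_def by auto
  have E0: "0 \<le> ?E" using s1.avg_err_nonneg E by simp
  have Mpos: "0 < M" using mpos mM by linarith
  have rho: "0 < ?\<rho>" "?\<rho> \<le> 1/2" using mpos Mpos mM by (auto simp: field_simps)
  have ox: "s2.gmax - s2.gmin \<le> (1 - ?\<rho>) * (s1.gmax - s1.gmin) + 2 * ?E"
    using s1.oscillation_contraction E unfolding s2.gmax_def s2.gmin_def by simp
  have ow: "s1.gmax - s1.gmin \<le> (1 - ?\<rho>) * (s2.gmax - s2.gmin) + 2 * ?E"
    using s2.oscillation_contraction E unfolding s1.gmax_def s1.gmin_def by simp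
  have ox0: "0 \<le> s2.gmax - s2.gmin" using s2.g_range[of 0] n3 by auto
  have ow0: "0 \<le> s1.gmax - s1.gmin" using s1.g_range[of 0] n3 by auto
  define K where "K = M / m * ?E"
  have e: "2 * ?E / ?\<rho> = 4 * K" unfolding K_def using mpos Mpos by (simp add: field_simps)
  have oxb: "s2.gmax - s2.gmin \<le> 4 * K"
    using coupled_oscillation_bound[OF rho ox0 ow0 ox ow] e by simp
  have owb: "s1.gmax - s1.gmin \<le> 4 * K"
    using coupled_oscillation_bound[OF rho ow0 ox0 ow ox] e by simp
  have "1 \<le> M / m" using mpos mM by simp
  then have bnd: "?E \<le> K" unfolding K_def using mult_right_mono[OF _ E0, of 1 "M / m"] by simp
  (* the pinned value w_{n-1} = 0, and x_{n-1} within E of the range of w, anchor both ranges at 0 *)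
  have n1: "n - 1 < n" using n3 by auto
  have wr: "s1.gmin \<le> 0" "0 \<le> s1.gmax" using s1.g_range[OF n1] w0 by auto
  have xr: "s2.gmin - ?E \<le> 0" "0 \<le> s2.gmax + ?E" using s2.f_range[OF n1] w0 E by auto
  have "\<bar>w i\<bar> \<le> s1.gmax - s1.gmin" using s1.g_range[OF i] wr by auto
  then have w_bound: "\<bar>w i\<bar> \<le> 5 * K" using owb bnd E0 by linarith
  have "\<bar>x i\<bar> \<le> (s2.gmax - s2.gmin) + ?E" using s2.g_range[OF i] xr by auto
  then have x_bound: "\<bar>x i\<bar> \<le> 5 * K" using oxb bnd by linarith
  show ?thesis using w_bound x_bound unfolding K_def by simp
qed


section \<open>Part (b): the Jacobian system and the degree equations\<close>

lemma bipartite_sum_antisym: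
  fixes u :: "nat \<Rightarrow> nat \<Rightarrow> real" and x w :: "nat \<Rightarrow> real" and n :: nat
  shows "(\<Sum>j<n. \<Sum>k\<in>{k. k < n \<and> k \<noteq> j}. u k j * (w j - x k))
           = - (\<Sum>i<n. \<Sum>k\<in>{k. k < n \<and> k \<noteq> i}. u i k * (x i - w k))"
proof -
  have "(\<Sum>j<n. \<Sum>k\<in>{k. k < n \<and> k \<noteq> j}. u k j * (w j - x k))
          = (\<Sum>j<n. \<Sum>k<n. if k \<noteq> j then u k j * (w j - x k) else 0)"
    by (simp add: sum_punctured)
  also have "\<dots> = (\<Sum>k<n. \<Sum>j<n. if k \<noteq> j then u k j * (w j - x k) else 0)" by (rule sum.swap)
  also have "\<dots> = (\<Sum>k<n. - (\<Sum>j<n. if j \<noteq> k then u k j * (x k - w j) else 0))"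
    by (intro sum.cong refl) (auto simp: sum_negf[symmetric] algebra_simps intro!: sum.cong)
  also have "\<dots> = - (\<Sum>i<n. \<Sum>k\<in>{k. k < n \<and> k \<noteq> i}. u i k * (x i - w k))"
    by (simp add: sum_punctured sum_negf)
  finally show ?thesis .
qed

text \<open>The equation for \<open>w_{n-1}\<close> has no row in \<open>F'(theta)\<close> (since \<open>beta_n = 0\<close> is fixed), but it is
  the difference of the alpha-row sum and the beta-row sum.\<close>

lemma Jac_missing_row:
  assumes n: "n \<ge> 2" and d: "dim_vec \<theta> = 2 * n - 1" and dz: "dim_vec z = 2 * n - 1"
  shows "(\<Sum>k\<in>{k. k < n \<and> k \<noteq> n - 1}. jac_weight n \<theta> k (n - 1) * (neg_beta_part n z (n - 1) - z $ k))
           = (\<Sum>i<n. (Jac n A \<theta> *\<^sub>v z) $ i) - (\<Sum>j<n-1. (Jac n A \<theta> *\<^sub>v z) $ (n + j))"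
proof -
  let ?beta_row = "\<lambda>j. (\<Sum>k\<in>{k. k < n \<and> k \<noteq> j}. jac_weight n \<theta> k j * (neg_beta_part n z j - z $ k))"
  let ?alpha_row = "\<lambda>i. (\<Sum>k\<in>{k. k < n \<and> k \<noteq> i}. jac_weight n \<theta> i k * (z $ i - neg_beta_part n z k))"
  have antisym: "(\<Sum>j<n. ?beta_row j) = - (\<Sum>i<n. ?alpha_row i)"
    by (rule bipartite_sum_antisym[of "jac_weight n \<theta>" "neg_beta_part n z" "\<lambda>k. z $ k" n])
  have alpha_sum: "(\<Sum>i<n. (Jac n A \<theta> *\<^sub>v z) $ i) = - (\<Sum>i<n. ?alpha_row i)"
    using Jac_mult_alpha_row[OF n d _ dz] by (simp add: sum_negf)
  have beta_sum: "(\<Sum>j<n-1. (Jac n A \<theta> *\<^sub>v z) $ (n + j)) = (\<Sum>j<n-1. ?beta_row j)"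
    using Jac_mult_beta_row[OF n d _ dz] by simp
  have split_last: "(\<Sum>j<n. ?beta_row j) = (\<Sum>j<n-1. ?beta_row j) + ?beta_row (n - 1)"
    using n by (intro sum_lessThan_last) auto
  show ?thesis using antisym alpha_sum beta_sum split_last by linarith
qed

lemma card_as_sum: "real (card {j. j < n \<and> P j}) = (\<Sum>j<(n::nat). if P j then 1 else 0)"
proof -
  have "{j. j < n \<and> P j} = {..<n} \<inter> {j. P j}" by auto
  then show ?thesis using sum.inter_restrict[of "{..<n}" "\<lambda>_. 1::real" "{j. P j}"] by simp
qed

text \<open>Both the observed and the expected degrees satisfy \<open>sum_i d_i = sum_j b_j\<close>; hence the
  missing row of \<open>F(theta)\<close> is the in-degree deviation of vertex \<open>n\<close>.\<close>

lemma degree_balance: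
  assumes n: "n \<ge> 2"
  shows "(\<Sum>i<n. Fcomp n A \<theta> i) - (\<Sum>j<n-1. Fcomp n A \<theta> (n + j))
           = indeg n A (n - 1) - Eindeg n \<theta> (n - 1)"
proof -
  have o: "(\<Sum>i<n. outdeg n A i) = (\<Sum>j<n. indeg n A j)"
  proof -
    have "(\<Sum>i<n. outdeg n A i) = (\<Sum>i<n. \<Sum>j<n. if j \<noteq> i \<and> A i j then 1 else 0)"
      unfolding outdeg_def by (subst card_as_sum) (auto intro!: sum.cong)
    also have "\<dots> = (\<Sum>j<n. \<Sum>i<n. if j \<noteq> i \<and> A i j then 1 else 0)" by (rule sum.swap)
    also have "\<dots> = (\<Sum>j<n. indeg n A j)"
      unfolding indeg_def by (subst card_as_sum) (auto intro!: sum.cong)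
    finally show ?thesis .
  qed
  have e: "(\<Sum>i<n. Eoutdeg n \<theta> i) = (\<Sum>j<n. Eindeg n \<theta> j)"
  proof -
    have "(\<Sum>i<n. Eoutdeg n \<theta> i)
            = (\<Sum>i<n. \<Sum>k<n. if k \<noteq> i then logistic (alpha \<theta> i + beta n \<theta> k) else 0)"
      unfolding Eoutdeg_def by (simp add: sum_punctured)
    also have "\<dots> = (\<Sum>k<n. \<Sum>i<n. if k \<noteq> i then logistic (alpha \<theta> i + beta n \<theta> k) else 0)"
      by (rule sum.swap)
    also have "\<dots> = (\<Sum>j<n. Eindeg n \<theta> j)"
      unfolding Eindeg_def by (simp add: sum_punctured) (auto intro!: sum.cong)
    finally show ?thesis .
  qed
  have F1: "(\<Sum>i<n. Fcomp n A \<theta> i) = (\<Sum>i<n. outdeg n A i) - (\<Sum>i<n. Eoutdeg n \<theta> i)"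
    unfolding Fcomp_def Eoutdeg_def by (simp add: sum_subtractf)
  have F2: "(\<Sum>j<n-1. Fcomp n A \<theta> (n + j)) = (\<Sum>j<n-1. indeg n A j) - (\<Sum>j<n-1. Eindeg n \<theta> j)"
    unfolding Fcomp_def Eindeg_def by (simp add: sum_subtractf)
  have l1: "(\<Sum>j<n. indeg n A j) = (\<Sum>j<n-1. indeg n A j) + indeg n A (n - 1)"
    using n by (intro sum_lessThan_last) auto
  have l2: "(\<Sum>j<n. Eindeg n \<theta> j) = (\<Sum>j<n-1. Eindeg n \<theta> j) + Eindeg n \<theta> (n - 1)"
    using n by (intro sum_lessThan_last) auto
  show ?thesis using o e F1 F2 l1 l2 by linarith
qed

lemma jac_weight_bounds:
  assumes d: "dim_vec \<theta> = 2 * n - 1" and i: "i < n" and n: "n \<ge> 2"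
  shows "exp (- 2 * linf \<theta>) / 4 \<le> jac_weight n \<theta> i k \<and> jac_weight n \<theta> i k \<le> 1 / 4"
proof -
  let ?T = "linf \<theta>"
  have a: "\<bar>alpha \<theta> i\<bar> \<le> ?T" unfolding alpha_def using linf_ge[of i \<theta>] d i n by auto
  have b: "\<bar>beta n \<theta> k\<bar> \<le> ?T"
    unfolding beta_def using linf_ge[of "n + k" \<theta>] d linf_nonneg[of \<theta>] by auto
  have "\<bar>alpha \<theta> i + beta n \<theta> k\<bar> \<le> 2 * ?T" using a b by linarith
  then have e: "exp (- 2 * ?T) / 4 \<le> exp (- \<bar>alpha \<theta> i + beta n \<theta> k\<bar>) / 4" by simp
  show ?thesis unfolding jac_weight_def
    by (rule conjI, rule order_trans[OF e logistic_deriv_lower], rule logistic_deriv_le)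
qed

lemma Jac_solution_bound:
  fixes z :: "real vec"
  assumes n: "n \<ge> 3" and d: "dim_vec \<theta> = 2 * n - 1" and dz: "dim_vec z = 2 * n - 1"
    and rows: "\<And>i. i < 2 * n - 1 \<Longrightarrow> \<bar>(Jac n A \<theta> *\<^sub>v z) $ i\<bar> \<le> \<epsilon>"
    and missing: "\<bar>(\<Sum>i<n. (Jac n A \<theta> *\<^sub>v z) $ i) - (\<Sum>j<n-1. (Jac n A \<theta> *\<^sub>v z) $ (n + j))\<bar> \<le> \<epsilon>"
    and i: "i < 2 * n - 1"
  shows "\<bar>z $ i\<bar> \<le> 20 * exp (4 * linf \<theta>) * (\<epsilon> / (real n - 1))"
proof -
  let ?T = "linf \<theta>"
  let ?m = "exp (- 2 * ?T) / 4"
  let ?M = "1/4 :: real"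
  have n2: "n \<ge> 2" using n by auto
  have mpos: "?m > 0" by simp
  have mM: "?m \<le> ?M" using linf_nonneg[of \<theta>] by simp
  have weights: "?m \<le> jac_weight n \<theta> i k \<and> jac_weight n \<theta> i k \<le> ?M" if "i < n" for i k
    using jac_weight_bounds[OF d that n2] .
  have w0: "neg_beta_part n z (n - 1) = 0" unfolding neg_beta_part_def by simp
  have balance_x:
    "\<bar>\<Sum>k\<in>{k. k < n \<and> k \<noteq> i}. jac_weight n \<theta> i k * (z $ i - neg_beta_part n z k)\<bar> \<le> \<epsilon>"
    if "i < n" for i
    using rows[of i] Jac_mult_alpha_row[OF n2 d that dz, of A] that by simp
  have balance_w:
    "\<bar>\<Sum>k\<in>{k. k < n \<and> k \<noteq> j}. jac_weight n \<theta> k j * (neg_beta_part n z j - z $ k)\<bar> \<le> \<epsilon>"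
    if "j < n" for j
  proof (cases "j < n - 1")
    case True
    then show ?thesis using rows[of "n + j"] Jac_mult_beta_row[OF n2 d True dz, of A] by simp
  next
    case False
    then have "j = n - 1" using that by auto
    then show ?thesis using Jac_missing_row[OF n2 d dz, of A] missing by simp
  qed
  have mp: "\<bar>z $ k\<bar> \<le> 5 * (?M / ?m) * (\<epsilon> / ((real n - 1) * ?m)) \<and>
             \<bar>neg_beta_part n z k\<bar> \<le> 5 * (?M / ?m) * (\<epsilon> / ((real n - 1) * ?m))" if "k < n" for k
    using bipartite_maximum_principle[where u="jac_weight n \<theta>" and x="\<lambda>k. z $ k" and w="neg_beta_part n z"]
      n mpos mM weights w0 balance_x balance_w that
    by blast
  have B: "5 * (?M / ?m) * (\<epsilon> / ((real n - 1) * ?m)) = 20 * exp (4 * ?T) * (\<epsilon> / (real n - 1))"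
  proof -
    have e1: "exp (- 2 * ?T) = 1 / exp (2 * ?T)" using exp_minus[of "2 * ?T"] by (simp add: divide_inverse)
    have e2: "exp (4 * ?T) = exp (2 * ?T) * exp (2 * ?T)" by (simp add: exp_add[symmetric])
    have pos: "exp (2 * ?T) > 0" "real n - 1 > 0" using n by auto
    show ?thesis unfolding e1 e2 using pos by (simp add: field_simps)
  qed
  show ?thesis
  proof (cases "i < n")
    case True
    then show ?thesis using mp[OF True] B by simp
  next
    case False
    then have j: "i - n < n" and j1: "i - n < n - 1" using i by auto
    have "\<bar>z $ i\<bar> = \<bar>neg_beta_part n z (i - n)\<bar>" unfolding neg_beta_part_def using j1 False by simp
    then show ?thesis using mp[OF j] B by simp
  qed
qed

lemma sqrt_log_ratio_bound:
  assumes n: "n \<ge> (3::nat)"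
  shows "sqrt ((real n - 1) * ln (real n - 1)) / (real n - 1) \<le> 3/2 * (sqrt (ln (real n)) / sqrt (real n))"
proof -
  have n1: "real n - 1 > 0" "real n - 1 \<ge> 2" using n by auto
  have "sqrt ((real n - 1) * ln (real n - 1)) / (real n - 1) = sqrt ((real n - 1) * ln (real n - 1)) / sqrt ((real n - 1)^2)"
    using n1 by simp
  also have "\<dots> = sqrt (ln (real n - 1) / (real n - 1))"
    unfolding real_sqrt_divide[symmetric] using n1 by (simp add: power2_eq_square)
  also have "\<dots> \<le> sqrt (2 * (ln (real n) / real n))"
  proof (rule real_sqrt_le_mono)
    have l0: "0 \<le> ln (real n - 1)" using n1 by simp
    have l1: "ln (real n - 1) \<le> ln (real n)" using n1 by simp
    have "ln (real n - 1) / (real n - 1) \<le> ln (real n) / (real n - 1)"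
      using l1 n1 by (intro divide_right_mono) auto
    also have "\<dots> \<le> ln (real n) / (real n / 2)"
      using l0 l1 n1 by (intro divide_left_mono) auto
    finally have X: "ln (real n - 1) / (real n - 1) \<le> ln (real n) / (real n / 2)" .
    have E: "ln (real n) / (real n / 2) = 2 * (ln (real n) / real n)" by simp
    show "ln (real n - 1) / (real n - 1) \<le> 2 * (ln (real n) / real n)" using X unfolding E .
  qed
  also have "\<dots> = sqrt 2 * (sqrt (ln (real n)) / sqrt (real n))"
    by (simp add: real_sqrt_mult real_sqrt_divide)
  also have "\<dots> \<le> 3/2 * (sqrt (ln (real n)) / sqrt (real n))"
  proof (rule mult_right_mono)
    have "sqrt 2 \<le> sqrt ((3/2)^2)" by (rule real_sqrt_le_mono) (simp add: power2_eq_square)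
    then show "sqrt 2 \<le> 3/2" by simp
    show "0 \<le> sqrt (ln (real n)) / sqrt (real n)" using n by simp
  qed
  finally show ?thesis .
qed


lemma Fvec_bounds:
  fixes \<theta> :: "real vec" and \<epsilon> :: real
  assumes n: "n \<ge> 2"
    and dev: "max (Max {\<bar>outdeg n A i - Eoutdeg n \<theta> i\<bar> | i. i < n})
                  (Max {\<bar>indeg n A j - Eindeg n \<theta> j\<bar> | j. j < n}) \<le> \<epsilon>"
  shows "\<And>i. i < 2 * n - 1 \<Longrightarrow> \<bar>Fvec n A \<theta> $ i\<bar> \<le> \<epsilon>"
    and "\<bar>(\<Sum>i<n. Fvec n A \<theta> $ i) - (\<Sum>j<n-1. Fvec n A \<theta> $ (n + j))\<bar> \<le> \<epsilon>"
proof -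
  have out: "\<bar>outdeg n A i - Eoutdeg n \<theta> i\<bar> \<le> \<epsilon>" if "i < n" for i
    using Max_ge[of "{\<bar>outdeg n A i - Eoutdeg n \<theta> i\<bar> | i. i < n}"] that dev by fastforce
  have inn: "\<bar>indeg n A j - Eindeg n \<theta> j\<bar> \<le> \<epsilon>" if "j < n" for j
    using Max_ge[of "{\<bar>indeg n A j - Eindeg n \<theta> j\<bar> | j. j < n}"] that dev by fastforce
  have F: "Fvec n A \<theta> $ i = Fcomp n A \<theta> i" if "i < 2 * n - 1" for i
    unfolding Fvec_def using that by simp
  show "\<bar>Fvec n A \<theta> $ i\<bar> \<le> \<epsilon>" if i: "i < 2 * n - 1" for i
  proof (cases "i < n")
    case True
    then show ?thesis using out[OF True] F[OF i] unfolding Fcomp_def Eoutdeg_def by simp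
  next
    case False
    then have "i - n < n" using i by auto
    then show ?thesis using inn[of "i - n"] F[OF i] False unfolding Fcomp_def Eindeg_def by simp
  qed
  have "(\<Sum>i<n. Fvec n A \<theta> $ i) - (\<Sum>j<n-1. Fvec n A \<theta> $ (n + j))
          = (\<Sum>i<n. Fcomp n A \<theta> i) - (\<Sum>j<n-1. Fcomp n A \<theta> (n + j))"
    using F n by simp
  then show "\<bar>(\<Sum>i<n. Fvec n A \<theta> $ i) - (\<Sum>j<n-1. Fvec n A \<theta> $ (n + j))\<bar> \<le> \<epsilon>"
    using degree_balance[OF n, of A \<theta>] inn[of "n - 1"] n by simp
qed

text \<open>With \<open>eps = 0\<close> the central estimate shows that \<open>F'(theta)\<close> has trivial kernel.\<close>

lemma Jac_invertible:
  assumes n: "n \<ge> 3" and d: "dim_vec \<theta> = 2 * n - 1"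
  shows "invertible_mat (Jac n A \<theta>)"
proof -
  let ?N = "2 * n - 1" and ?J = "Jac n A \<theta>"
  have "det ?J \<noteq> 0"
  proof
    assume "det ?J = 0"
    then obtain v where v: "v \<in> carrier_vec ?N" "v \<noteq> 0\<^sub>v ?N" "?J *\<^sub>v v = 0\<^sub>v ?N"
      using det_0_iff_vec_prod_zero[OF Jac_carrier] by auto
    have "\<bar>v $ i\<bar> \<le> 20 * exp (4 * linf \<theta>) * (0 / (real n - 1))" if "i < ?N" for i
      using v that by (intro Jac_solution_bound[OF n d, of v A 0]) auto
    then have "v = 0\<^sub>v ?N" using v(1) by (intro eq_vecI) auto
    with v(2) show False by simp
  qed
  then have "?J \<in> Units (ring_mat TYPE(real) ?N ())" by (rule det_non_zero_imp_unit[OF Jac_carrier])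
  then obtain B where B: "B \<in> carrier_mat ?N ?N" "?J * B = 1\<^sub>m ?N" "B * ?J = 1\<^sub>m ?N"
    unfolding Units_def ring_mat_def by auto
  then show ?thesis unfolding invertible_mat_def inverts_mat_def by auto
qed

lemma Jac_inverse_mult_bound:
  fixes b :: "real vec"
  assumes n: "n \<ge> 3" and d: "dim_vec \<theta> = 2 * n - 1"
    and B: "B \<in> carrier_mat (2 * n - 1) (2 * n - 1)" "inverts_mat B (Jac n A \<theta>)"
    and b: "dim_vec b = 2 * n - 1" "\<And>i. i < 2 * n - 1 \<Longrightarrow> \<bar>b $ i\<bar> \<le> \<epsilon>"
      "\<bar>(\<Sum>i<n. b $ i) - (\<Sum>j<n-1. b $ (n + j))\<bar> \<le> \<epsilon>"
  shows "linf (B *\<^sub>v b) \<le> 20 * exp (4 * linf \<theta>) * (\<epsilon> / (real n - 1))"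
proof -
  let ?N = "2 * n - 1" and ?J = "Jac n A \<theta>"
  have "B * ?J = 1\<^sub>m ?N" using B unfolding inverts_mat_def by auto
  then have JB: "?J * B = 1\<^sub>m ?N" by (rule mat_mult_left_right_inverse[OF B(1) Jac_carrier])
  have bc: "b \<in> carrier_vec ?N" using b(1) by (rule carrier_vecI)
  have "?J *\<^sub>v (B *\<^sub>v b) = (?J * B) *\<^sub>v b"
    using assoc_mult_mat_vec[OF Jac_carrier[of n A \<theta>] B(1) bc] by simp
  also have "\<dots> = b" using JB one_mult_mat_vec[OF bc] by simp
  finally have "?J *\<^sub>v (B *\<^sub>v b) = b" .
  moreover have dz: "dim_vec (B *\<^sub>v b) = ?N" using B(1) by simp
  ultimately have "\<bar>(B *\<^sub>v b) $ i\<bar> \<le> 20 * exp (4 * linf \<theta>) * (\<epsilon> / (real n - 1))" if "i < ?N" for i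
    using b that by (intro Jac_solution_bound[OF n d dz, of A \<epsilon>]) auto
  moreover have "\<bar>b $ 0\<bar> \<le> \<epsilon>" using n by (intro b(2)) simp
  then have "0 \<le> \<epsilon>" by (meson abs_ge_zero order_trans)
  ultimately show ?thesis using n dz by (intro linf_le) auto
qed

text \<open>Part (b) for a fixed \<open>n \<ge> 3\<close>, with \<open>c11 = 30\<close> and \<open>c12 = 1\<close>, since
  \<open>20 e^{4T} (3/2) sqrt(log n / n) \<le> 30 e^{6T} sqrt(log n / n)\<close>.\<close>

lemma newton_step_bound:
  assumes n: "n \<ge> 3" and d: "dim_vec \<theta> = 2 * n - 1"
    and dev: "max (Max {\<bar>outdeg n A i - Eoutdeg n \<theta> i\<bar> | i. i < n})
                  (Max {\<bar>indeg n A j - Eindeg n \<theta> j\<bar> | j. j < n})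
               \<le> sqrt ((real n - 1) * ln (real n - 1))"
    and B: "B \<in> carrier_mat (2 * n - 1) (2 * n - 1)" "inverts_mat B (Jac n A \<theta>)"
  shows "linf (B *\<^sub>v Fvec n A \<theta>)
           \<le> sqrt (ln (real n)) / sqrt (real n) * (30 * exp (6 * linf \<theta>) + 1 * exp (2 * linf \<theta>))"
proof -
  let ?T = "linf \<theta>" and ?s = "sqrt (ln (real n)) / sqrt (real n)"
  let ?\<epsilon> = "sqrt ((real n - 1) * ln (real n - 1))"
  have "linf (B *\<^sub>v Fvec n A \<theta>) \<le> 20 * exp (4 * ?T) * (?\<epsilon> / (real n - 1))"
    using Fvec_bounds[of n A \<theta> ?\<epsilon>] dev n
    by (intro Jac_inverse_mult_bound[OF n d B]) (auto simp: Fvec_def)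
  also have "\<dots> \<le> 20 * exp (4 * ?T) * (3/2 * ?s)"
    using sqrt_log_ratio_bound[OF n] by (intro mult_left_mono) auto
  also have "\<dots> = ?s * (30 * exp (4 * ?T))" by simp
  also have "\<dots> \<le> ?s * (30 * exp (6 * ?T) + 1 * exp (2 * ?T))"
    using n linf_nonneg[of \<theta>] by (intro mult_left_mono) (auto simp: add_increasing2)
  finally show ?thesis .
qed

lemma newton_step_eventually:
  assumes "\<forall>n \<ge> 2. dim_vec (\<theta>s n) = 2 * n - 1"
  shows "\<forall>\<^sub>F n in sequentially. \<forall>A :: nat \<Rightarrow> nat \<Rightarrow> bool.
           max (Max {\<bar>outdeg n A i - Eoutdeg n (\<theta>s n) i\<bar> | i. i < n})
               (Max {\<bar>indeg n A j - Eindeg n (\<theta>s n) j\<bar> | j. j < n})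
             \<le> sqrt ((real n - 1) * ln (real n - 1)) \<longrightarrow>
           invertible_mat (Jac n A (\<theta>s n)) \<and>
           (\<forall>B \<in> carrier_mat (2 * n - 1) (2 * n - 1). inverts_mat B (Jac n A (\<theta>s n)) \<longrightarrow>
              linf (B *\<^sub>v Fvec n A (\<theta>s n))
                \<le> sqrt (ln (real n)) / sqrt (real n) *
                    (30 * exp (6 * linf (\<theta>s n)) + 1 * exp (2 * linf (\<theta>s n))))"
  unfolding eventually_sequentially using assms
  by (intro exI[of _ 3] allI impI conjI ballI Jac_invertible newton_step_bound) auto


theorem lemma2:
  shows "(\<forall>n::nat. \<forall>A x y v. n \<ge> 2 \<longrightarrow>
            dim_vec x = 2 * n - 1 \<longrightarrow> dim_vec y = 2 * n - 1 \<longrightarrow> dim_vec v = 2 * n - 1 \<longrightarrow>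
            linf ((Jac n A x - Jac n A y) *\<^sub>v v) \<le> (real n - 1) * linf (x - y) * linf v \<and>
            (\<forall>i < 2 * n - 1. linf (row (Jac n A x) i - row (Jac n A y) i)
                               \<le> (real n - 1) / 2 * linf (x - y)))
     \<and>
     (\<exists>c11 c12 :: real. c11 > 0 \<and> c12 > 0 \<and>
       (\<forall>\<theta>s :: nat \<Rightarrow> real vec.
          (\<forall>n \<ge> 2. dim_vec (\<theta>s n) = 2 * n - 1) \<longrightarrow>
          ((\<lambda>n. exp (2 * linf (\<theta>s n)) / real n) \<longlonglongrightarrow> 0) \<longrightarrow>
          (\<forall>\<^sub>F n in sequentially. \<forall>A :: nat \<Rightarrow> nat \<Rightarrow> bool.
             max (Max {\<bar>outdeg n A i - Eoutdeg n (\<theta>s n) i\<bar> | i. i < n})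
                 (Max {\<bar>indeg n A j - Eindeg n (\<theta>s n) j\<bar> | j. j < n})
               \<le> sqrt ((real n - 1) * ln (real n - 1)) \<longrightarrow>
             invertible_mat (Jac n A (\<theta>s n)) \<and>
             (\<forall>B \<in> carrier_mat (2 * n - 1) (2 * n - 1). inverts_mat B (Jac n A (\<theta>s n)) \<longrightarrow>
                linf (B *\<^sub>v Fvec n A (\<theta>s n))
                  \<le> sqrt (ln (real n)) / sqrt (real n) *
                      (c11 * exp (6 * linf (\<theta>s n)) + c12 * exp (2 * linf (\<theta>s n)))))))"
    (is "?part_a \<and> ?part_b")
proof
  show ?part_a using Jac_diff_mult_bound Jac_row_diff_bound by blast
  show ?part_b
    by (rule exI[of _ 30], rule exI[of _ 1], intro conjI allI impI)
      (simp, simp, erule newton_step_eventually)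
qed

end
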